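(* Under the standing assumptions, assume $n\le m$ and that all kept singular values $S_{kk}$ are strictly positive. Set $\widetilde{dU}_2:=(\mathbb{1}_n-UU^\dagger)dU$ and $\widetilde{dV}_2:=(\mathbb{1}_m-VV^\dagger)dV$. Then $dU=U(U^\dagger dU)+\widetilde{dU}_2$, $dV=V(V^\dagger dV)+\widetilde{dV}_2$, the matrix $\widetilde{dU}_2$ satisfies the Sylvester equation $$\widetilde{dU}_2\,S^2-AA^\dagger\,\widetilde{dU}_2=(\mathbb{1}_n-UU^\dagger)\,dA\,V S+A(\mathbb{1}_m-VV^\dagger)\,dA^\dagger U,$$ and $$\widetilde{dV}_2=(\mathbb{1}_m-VV^\dagger)\,dA^\dagger U S^{-1}+A^\dagger\,\widetilde{dU}_2\,S^{-1}.$$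
   Context: Let $n,m\ge1$, $r=\min(n,m)$ and $1\le t<r$. Let $\tau\mapsto A(\tau)\in\mathbb{C}^{n\times m}$ be differentiable, and suppose there are differentiable maps $\tau\mapsto U\in\mathbb{C}^{n\times t}$, $S\in\mathbb{R}^{t\times t}$, $V\in\mathbb{C}^{m\times t}$, $U_\perp\in\mathbb{C}^{n\times(r-t)}$, $S_\perp\in\mathbb{R}^{(r-t)\times(r-t)}$, $V_\perp\in\mathbb{C}^{m\times(r-t)}$ such that for every $\tau$: $A=USV^\dagger+U_\perp S_\perp V_\perp^\dagger$ is a (thin) singular value decomposition, i.e. $S,S_\perp$ are diagonal with nonnegative entries, $(U\,|\,U_\perp)$ and $(V\,|\,V_\perp)$ have orthonormal columns. Here $d$ denotes the derivative with respect to $\tau$, $^\dagger$ the conjugate transpose, $\mathbb{1}_k$ the $k\times k$ identity. (The formulas involve only $A,dA,U,S,V$, not $U_\perp,S_\perp,V_\perp$.) *)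

theory Defs
  imports "Jordan_Normal_Form.Schur_Decomposition"
begin

definition mat_has_deriv ::
  "(real \<Rightarrow> 'a::real_normed_vector mat) \<Rightarrow> 'a mat \<Rightarrow> real \<Rightarrow> bool" where
  "mat_has_deriv F D t \<longleftrightarrow>
     dim_row D = dim_row (F t) \<and> dim_col D = dim_col (F t) \<and>
     (\<forall>i<dim_row (F t). \<forall>j<dim_col (F t).
        ((\<lambda>s. F s $$ (i,j)) has_vector_derivative D $$ (i,j)) (at t))"

definition mat_differentiable ::
  "(real \<Rightarrow> 'a::real_normed_vector mat) \<Rightarrow> real \<Rightarrow> bool" where
  "mat_differentiable F t \<longleftrightarrow> (\<exists>D. mat_has_deriv F D t)"

definition cmat :: "real mat \<Rightarrow> complex mat" where
  "cmat S = map_mat complex_of_real S"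

definition nonneg_diag :: "real mat \<Rightarrow> bool" where
  "nonneg_diag S \<longleftrightarrow> diagonal_mat S \<and> (\<forall>k<dim_row S. S $$ (k,k) \<ge> 0)"

definition hcat :: "'a mat \<Rightarrow> 'a mat \<Rightarrow> 'a mat" where
  "hcat X Y = mat (dim_row X) (dim_col X + dim_col Y)
     (\<lambda>(i,j). if j < dim_col X then X $$ (i,j) else Y $$ (i, j - dim_col X))"

definition orthonormal_cols :: "complex mat \<Rightarrow> bool" where
  "orthonormal_cols M \<longleftrightarrow> mat_adjoint M * M = 1\<^sub>m (dim_col M)"

end

theory Submission
  imports Defs
begin

text \<open>
  Orthonormality of the full singular vectors gives \<open>A V = U S\<close> and
  \<open>A\<^sup>\<dagger> U = V S\<close> for every parameter; differentiating yields
  \<open>dA V + A dV = dU S + U dS\<close> and its adjoint counterpart.  The projector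
  \<open>P = 1 - U U\<^sup>\<dagger>\<close> annihilates \<open>U\<close>, which removes the unknown \<open>dS\<close>,
  and intertwines \<open>A\<close> with \<open>Q = 1 - V V\<^sup>\<dagger>\<close>.  Hence \<open>X = P dU\<close> and
  \<open>Y = Q dV\<close> satisfy the coupled system \<open>X S = P dA V + A Y\<close>,
  \<open>Y S = Q dA\<^sup>\<dagger> U + A\<^sup>\<dagger> X\<close>: substituting the second equation into the
  first, multiplied by \<open>S\<close>, gives the Sylvester equation, and inverting \<open>S\<close> in the
  second gives \<open>dV\<^sub>2\<close>.
\<close>

lemma dim_row_mat_adjoint [simp]: "dim_row (mat_adjoint M) = dim_col M"
  and dim_col_mat_adjoint [simp]: "dim_col (mat_adjoint M) = dim_row M"
  by (auto simp: mat_adjoint_def)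

lemma index_mat_adjoint [simp]:
  "i < dim_col M \<Longrightarrow> j < dim_row M \<Longrightarrow> mat_adjoint (M :: complex mat) $$ (i, j) = cnj (M $$ (j, i))"
  by (simp add: mat_adjoint_def mat_of_rows_def)

lemma mat_adjoint_carrier [simp, intro]: "M \<in> carrier_mat n m \<Longrightarrow> mat_adjoint M \<in> carrier_mat m n"
  by auto

lemma mat_adjoint_adjoint [simp]: "mat_adjoint (mat_adjoint (M :: complex mat)) = M"
  by (intro eq_matI) auto

lemma mat_adjoint_mult:
  fixes A B :: "complex mat"
  assumes "A \<in> carrier_mat n k" "B \<in> carrier_mat k p"
  shows "mat_adjoint (A * B) = mat_adjoint B * mat_adjoint A"
  using assms by (intro eq_matI) (auto simp: scalar_prod_def cnj_sum mult.commute)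

lemma mat_adjoint_add:
  fixes A B :: "complex mat"
  assumes "A \<in> carrier_mat n k" "B \<in> carrier_mat n k"
  shows "mat_adjoint (A + B) = mat_adjoint A + mat_adjoint B"
  using assms by (intro eq_matI) auto

section \<open>Complementary projections\<close>

lemma complement_projection_decomposition:
  fixes u x :: "complex mat"
  assumes u: "u \<in> carrier_mat n t" and x: "x \<in> carrier_mat n k"
  shows "x = u * (mat_adjoint u * x) + (1\<^sub>m n - u * mat_adjoint u) * x"
proof -
  have "(1\<^sub>m n - u * mat_adjoint u) * x = x - u * (mat_adjoint u * x)"
    using assms by (simp add: minus_mult_distrib_mat[of _ n n] assoc_mult_mat[of u n t _ n x k])
  moreover have "u * (mat_adjoint u * x) \<in> carrier_mat n k"
    using assms by auto
  ultimately show ?thesis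
    using u x by (intro eq_matI) simp_all
qed

lemma complement_projection_annihilates:
  fixes u :: "complex mat"
  assumes u: "u \<in> carrier_mat n t" and orth: "mat_adjoint u * u = 1\<^sub>m t"
  shows "(1\<^sub>m n - u * mat_adjoint u) * u = 0\<^sub>m n t"
proof -
  have "(1\<^sub>m n - u * mat_adjoint u) * u = u - u * (mat_adjoint u * u)"
    using u by (simp add: minus_mult_distrib_mat[of _ n n] assoc_mult_mat[of u n t _ n u t])
  then show ?thesis
    using u orth by simp
qed

lemma complement_projection_intertwines:
  fixes a u v s :: "complex mat"
  assumes c: "a \<in> carrier_mat n m" "u \<in> carrier_mat n t" "v \<in> carrier_mat m t" "s \<in> carrier_mat t t"
    and s: "mat_adjoint s = s"
    and av: "a * v = u * s" and au: "mat_adjoint a * u = v * s"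
  shows "(1\<^sub>m n - u * mat_adjoint u) * a = a * (1\<^sub>m m - v * mat_adjoint v)"
proof -
  have "mat_adjoint u * a = mat_adjoint (mat_adjoint a * u)"
    using c by (simp add: mat_adjoint_mult[of _ m n])
  also have "\<dots> = s * mat_adjoint v"
    unfolding au using c s by (simp add: mat_adjoint_mult[of _ m t])
  finally have ua: "mat_adjoint u * a = s * mat_adjoint v" .
  have "u * mat_adjoint u * a = u * s * mat_adjoint v"
    using c ua by (simp add: assoc_mult_mat[of u n t _ n a m] assoc_mult_mat[of u n t s t _ m])
  also have "\<dots> = a * (v * mat_adjoint v)"
    using c by (simp del: assoc_mult_mat add: av[symmetric] assoc_mult_mat[of a n m v t _ m])
  finally have "u * mat_adjoint u * a = a * (v * mat_adjoint v)" .
  then show ?thesis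
    using c by (simp add: minus_mult_distrib_mat[of _ n n]
        mult_minus_distrib_mat[of a n m _ m "v * mat_adjoint v"])
qed

lemma projected_product_rule:
  fixes P Q a da u du v dv s ds :: "complex mat"
  assumes c: "P \<in> carrier_mat n n" "Q \<in> carrier_mat m m" "a \<in> carrier_mat n m" "da \<in> carrier_mat n m"
    "u \<in> carrier_mat n t" "du \<in> carrier_mat n t" "v \<in> carrier_mat m t" "dv \<in> carrier_mat m t"
    "s \<in> carrier_mat t t" "ds \<in> carrier_mat t t"
    and Pu: "P * u = 0\<^sub>m n t" and Pa: "P * a = a * Q"
    and d: "da * v + a * dv = du * s + u * ds"
  shows "P * du * s = P * da * v + a * (Q * dv)"
proof -
  have "P * (u * ds) = P * u * ds"
    using c by simp
  also have "\<dots> = 0\<^sub>m n t"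
    using c by (simp add: Pu)
  finally have "P * (u * ds) = 0\<^sub>m n t" .
  then have "P * du * s = P * (du * s + u * ds)"
    using c by (simp add: mult_add_distrib_mat[of P n n "du * s" t "u * ds"])
  also have "\<dots> = P * (da * v + a * dv)"
    by (simp only: d)
  also have "\<dots> = P * da * v + a * (Q * dv)"
  proof -
    have "P * (a * dv) = P * a * dv"
      using c by simp
    also have "\<dots> = a * (Q * dv)"
      using c by (simp add: Pa)
    finally show ?thesis
      using c by (simp add: mult_add_distrib_mat[of P n n "da * v" t "a * dv"])
  qed
  finally show ?thesis .
qed

lemma coupled_sylvester_elimination:
  fixes X Y B C a b s s' :: "complex mat"
  assumes c: "X \<in> carrier_mat n t" "Y \<in> carrier_mat m t" "B \<in> carrier_mat n t" "C \<in> carrier_mat m t"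
    "a \<in> carrier_mat n m" "b \<in> carrier_mat m n" "s \<in> carrier_mat t t" "s' \<in> carrier_mat t t"
    and X: "X * s = B + a * Y" and Y: "Y * s = C + b * X" and inv: "s * s' = 1\<^sub>m t"
  shows "X * (s * s) - a * b * X = B * s + a * C"
    and "Y = C * s' + b * X * s'"
proof -
  have "X * (s * s) = X * s * s"
    using c by simp
  also have "\<dots> = B * s + a * (Y * s)"
    using c by (simp add: X add_mult_distrib_mat[of _ n t])
  also have "\<dots> = B * s + (a * C + a * (b * X))"
    using c by (simp add: Y mult_add_distrib_mat[of a n m])
  finally have "X * (s * s) = B * s + (a * C + a * (b * X))" .
  then show "X * (s * s) - a * b * X = B * s + a * C"
    using c by (intro eq_matI) auto
  have "Y = Y * s * s'"
    using c by (simp add: inv)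
  then show "Y = C * s' + b * X * s'"
    using c by (simp add: Y add_mult_distrib_mat[of _ m t])
qed

lemma svd_derivative_projections:
  fixes a da u du v dv s ds s' :: "complex mat"
  assumes c: "a \<in> carrier_mat n m" "da \<in> carrier_mat n m" "u \<in> carrier_mat n t" "du \<in> carrier_mat n t"
    "v \<in> carrier_mat m t" "dv \<in> carrier_mat m t" "s \<in> carrier_mat t t" "ds \<in> carrier_mat t t"
    "s' \<in> carrier_mat t t"
    and uu: "mat_adjoint u * u = 1\<^sub>m t" and vv: "mat_adjoint v * v = 1\<^sub>m t"
    and s: "mat_adjoint s = s" and inv: "s * s' = 1\<^sub>m t"
    and av: "a * v = u * s" and au: "mat_adjoint a * u = v * s"
    and dav: "da * v + a * dv = du * s + u * ds"
    and dau: "mat_adjoint da * u + mat_adjoint a * du = dv * s + v * ds"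
  shows "du = u * (mat_adjoint u * du) + (1\<^sub>m n - u * mat_adjoint u) * du"
    and "dv = v * (mat_adjoint v * dv) + (1\<^sub>m m - v * mat_adjoint v) * dv"
    and "(1\<^sub>m n - u * mat_adjoint u) * du * (s * s)
           - a * mat_adjoint a * ((1\<^sub>m n - u * mat_adjoint u) * du)
         = (1\<^sub>m n - u * mat_adjoint u) * da * v * s
           + a * (1\<^sub>m m - v * mat_adjoint v) * mat_adjoint da * u"
    and "(1\<^sub>m m - v * mat_adjoint v) * dv
         = (1\<^sub>m m - v * mat_adjoint v) * mat_adjoint da * u * s'
           + mat_adjoint a * ((1\<^sub>m n - u * mat_adjoint u) * du) * s'"
proof -
  define P where "P = 1\<^sub>m n - u * mat_adjoint u"
  define Q where "Q = 1\<^sub>m m - v * mat_adjoint v"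
  have ca: "P \<in> carrier_mat n n" "Q \<in> carrier_mat m m"
    "mat_adjoint a \<in> carrier_mat m n" "mat_adjoint da \<in> carrier_mat m n"
    unfolding P_def Q_def using c by auto
  show "du = u * (mat_adjoint u * du) + (1\<^sub>m n - u * mat_adjoint u) * du"
    "dv = v * (mat_adjoint v * dv) + (1\<^sub>m m - v * mat_adjoint v) * dv"
    using c by (auto intro: complement_projection_decomposition)
  have Pu: "P * u = 0\<^sub>m n t" and Qv: "Q * v = 0\<^sub>m m t"
    unfolding P_def Q_def using c uu vv by (auto intro: complement_projection_annihilates)
  have Pa: "P * a = a * Q"
    unfolding P_def Q_def using c s av au by (intro complement_projection_intertwines)
  have Qa: "Q * mat_adjoint a = mat_adjoint a * P"
    unfolding P_def Q_def using c ca s av au by (intro complement_projection_intertwines) auto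
  have PduS: "P * du * s = P * da * v + a * (Q * dv)"
    using c ca Pu Pa dav by (intro projected_product_rule)
  have QdvS: "Q * dv * s = Q * mat_adjoint da * u + mat_adjoint a * (P * du)"
    using c ca Qv Qa dau by (intro projected_product_rule)
  note elim = coupled_sylvester_elimination[OF _ _ _ _ c(1) ca(3) c(7,9) PduS QdvS inv]
  have "P * du * (s * s) - a * mat_adjoint a * (P * du)
          = P * da * v * s + a * (Q * mat_adjoint da * u)"
    by (rule elim(1)) (use c ca in auto)
  moreover have "Q * dv = Q * mat_adjoint da * u * s' + mat_adjoint a * (P * du) * s'"
    by (rule elim(2)) (use c ca in auto)
  moreover have "a * (Q * mat_adjoint da * u) = a * Q * mat_adjoint da * u"
  proof -
    have "Q * mat_adjoint da \<in> carrier_mat m n"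
      using ca by auto
    then show ?thesis
      using assoc_mult_mat[OF c(1) ca(2) ca(4)] assoc_mult_mat[OF c(1) _ c(3)] by simp
  qed
  ultimately show "P * du * (s * s) - a * mat_adjoint a * (P * du)
                     = P * da * v * s + a * Q * mat_adjoint da * u"
    and "Q * dv = Q * mat_adjoint da * u * s' + mat_adjoint a * (P * du) * s'"
    by simp_all
qed

section \<open>Singular vector relations\<close>

lemma mat_adjoint_mult_index:
  fixes X Y :: "complex mat"
  assumes "X \<in> carrier_mat n p" "Y \<in> carrier_mat n q" "i < p" "j < q"
  shows "(mat_adjoint X * Y) $$ (i, j) = (\<Sum>l<n. cnj (X $$ (l, i)) * Y $$ (l, j))"
  using assms by (auto simp: scalar_prod_def atLeast0LessThan intro!: sum.cong)

lemma orthonormal_cols_hcatD: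
  fixes U W :: "complex mat"
  assumes U: "U \<in> carrier_mat n a" and W: "W \<in> carrier_mat n b"
    and orth: "orthonormal_cols (hcat U W)"
  shows "mat_adjoint U * U = 1\<^sub>m a" and "mat_adjoint W * U = 0\<^sub>m b a"
proof -
  let ?H = "hcat U W"
  have H: "?H \<in> carrier_mat n (a + b)"
    using U W by (auto simp: hcat_def)
  have HH: "mat_adjoint ?H * ?H = 1\<^sub>m (a + b)"
    using orth H unfolding orthonormal_cols_def by auto
  have left: "?H $$ (l, i) = U $$ (l, i)" if "l < n" "i < a" for l i
    using U W that by (auto simp: hcat_def)
  have right: "?H $$ (l, a + i) = W $$ (l, i)" if "l < n" "i < b" for l i
    using U W that by (auto simp: hcat_def)
  show "mat_adjoint U * U = 1\<^sub>m a"
  proof (rule eq_matI)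
    fix i j assume "i < dim_row (1\<^sub>m a :: complex mat)" "j < dim_col (1\<^sub>m a :: complex mat)"
    then have ij: "i < a" "j < a" by auto
    have "(mat_adjoint U * U) $$ (i, j) = (mat_adjoint ?H * ?H) $$ (i, j)"
      using mat_adjoint_mult_index[OF U U ij] mat_adjoint_mult_index[OF H H, of i j] left ij by simp
    then show "(mat_adjoint U * U) $$ (i, j) = 1\<^sub>m a $$ (i, j)"
      unfolding HH using ij by simp
  qed (use U in auto)
  show "mat_adjoint W * U = 0\<^sub>m b a"
  proof (rule eq_matI)
    fix i j assume "i < dim_row (0\<^sub>m b a :: complex mat)" "j < dim_col (0\<^sub>m b a :: complex mat)"
    then have ij: "i < b" "j < a" by auto
    have "(mat_adjoint W * U) $$ (i, j) = (mat_adjoint ?H * ?H) $$ (a + i, j)"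
      using mat_adjoint_mult_index[OF W U ij] mat_adjoint_mult_index[OF H H, of "a + i" j] left right ij
      by simp
    then show "(mat_adjoint W * U) $$ (i, j) = 0\<^sub>m b a $$ (i, j)"
      unfolding HH using ij by simp
  qed (use U W in auto)
qed

lemma svd_sum_mult_singular_vectors:
  fixes u s v u' s' v' :: "complex mat"
  assumes c: "u \<in> carrier_mat n t" "s \<in> carrier_mat t t" "v \<in> carrier_mat m t"
    "u' \<in> carrier_mat n k" "s' \<in> carrier_mat k k" "v' \<in> carrier_mat m k"
    and vv: "mat_adjoint v * v = 1\<^sub>m t" and v'v: "mat_adjoint v' * v = 0\<^sub>m k t"
  shows "(u * s * mat_adjoint v + u' * s' * mat_adjoint v') * v = u * s"
proof -
  have "u * s * mat_adjoint v * v = u * s"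
    using c by (simp add: assoc_mult_mat[of "u * s" n t _ m v t] vv)
  moreover have "u' * s' * mat_adjoint v' * v = 0\<^sub>m n t"
    using c by (simp add: assoc_mult_mat[of "u' * s'" n k _ m v t] v'v)
  moreover have "u * s * mat_adjoint v \<in> carrier_mat n m" "u' * s' * mat_adjoint v' \<in> carrier_mat n m"
    using c by auto
  ultimately show ?thesis
    using c by (simp del: assoc_mult_mat add: add_mult_distrib_mat[of _ n m _ v t])
qed

lemma mat_adjoint_svd_term:
  fixes u s v :: "complex mat"
  assumes c: "u \<in> carrier_mat n t" "s \<in> carrier_mat t t" "v \<in> carrier_mat m t"
    and s: "mat_adjoint s = s"
  shows "mat_adjoint (u * s * mat_adjoint v) = v * s * mat_adjoint u"
  using c s by (simp add: mat_adjoint_mult[of _ n t] mat_adjoint_mult[of "u * s" n t _ m]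
      assoc_mult_mat[of v m t s t _ n])

lemma svd_singular_vector_relations:
  fixes A u s v u' s' v' :: "complex mat"
  assumes c: "u \<in> carrier_mat n t" "s \<in> carrier_mat t t" "v \<in> carrier_mat m t"
    "u' \<in> carrier_mat n k" "s' \<in> carrier_mat k k" "v' \<in> carrier_mat m k"
    and A: "A = u * s * mat_adjoint v + u' * s' * mat_adjoint v'"
    and s: "mat_adjoint s = s" "mat_adjoint s' = s'"
    and ou: "orthonormal_cols (hcat u u')" and ov: "orthonormal_cols (hcat v v')"
  shows "A * v = u * s" and "mat_adjoint A * u = v * s"
proof -
  show "A * v = u * s"
    unfolding A using c orthonormal_cols_hcatD[OF c(3,6) ov]
    by (intro svd_sum_mult_singular_vectors)
  have "u * s * mat_adjoint v \<in> carrier_mat n m" "u' * s' * mat_adjoint v' \<in> carrier_mat n m"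
    using c by auto
  then have "mat_adjoint A = mat_adjoint (u * s * mat_adjoint v) + mat_adjoint (u' * s' * mat_adjoint v')"
    unfolding A by (rule mat_adjoint_add)
  also have "\<dots> = v * s * mat_adjoint u + v' * s' * mat_adjoint u'"
    using c s by (simp only: mat_adjoint_svd_term)
  finally show "mat_adjoint A * u = v * s"
    using c orthonormal_cols_hcatD[OF c(1,4) ou] by (simp add: svd_sum_mult_singular_vectors)
qed

lemma cmat_carrier [simp]: "S \<in> carrier_mat n m \<Longrightarrow> cmat S \<in> carrier_mat n m"
  by (simp add: cmat_def)

lemma mat_adjoint_cmat_diagonal:
  assumes "S \<in> carrier_mat t t" "diagonal_mat S"
  shows "mat_adjoint (cmat S) = cmat S"
proof (rule eq_matI)
  fix i j assume "i < dim_row (cmat S)" "j < dim_col (cmat S)"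
  then show "mat_adjoint (cmat S) $$ (i, j) = cmat S $$ (i, j)"
    using assms by (cases "i = j") (auto simp: cmat_def diagonal_mat_def)
qed (use assms in \<open>auto simp: cmat_def\<close>)

lemma mat_inverse_right_inverse:
  fixes A :: "'a :: field mat"
  assumes A: "A \<in> carrier_mat n n" and det: "det A \<noteq> 0"
  shows "A * the (mat_inverse A) = 1\<^sub>m n" and "the (mat_inverse A) \<in> carrier_mat n n"
proof -
  have "A \<in> Units (ring_mat TYPE('a) n ())"
    by (rule det_non_zero_imp_unit[OF A det])
  then obtain B where "mat_inverse A = Some B"
    using mat_inverse(1)[OF A, of "()"] by (cases "mat_inverse A") auto
  then show "A * the (mat_inverse A) = 1\<^sub>m n" "the (mat_inverse A) \<in> carrier_mat n n"
    using mat_inverse(2)[OF A] by auto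
qed

lemma det_cmat_diagonal_nonzero:
  assumes S: "S \<in> carrier_mat t t" and diag: "diagonal_mat S" and nz: "\<And>k. k < t \<Longrightarrow> S $$ (k, k) \<noteq> 0"
  shows "det (cmat S) \<noteq> 0"
proof -
  have "det (cmat S) = prod_list (diag_mat (cmat S))"
    by (rule det_lower_triangular) (use S diag in \<open>auto simp: cmat_def diagonal_mat_def\<close>)
  then show ?thesis
    using S nz by (auto simp: diag_mat_def cmat_def prod_list_zero_iff)
qed

section \<open>Derivatives of matrix-valued functions\<close>

lemma has_vector_derivative_unique_at:
  "(f has_vector_derivative a) (at x) \<Longrightarrow> (f has_vector_derivative b) (at x) \<Longrightarrow> a = b"
  unfolding has_vector_derivative_def
  by (drule (1) has_derivative_unique) (metis scaleR_one)

lemma mat_has_deriv_unique: "mat_has_deriv F D t \<Longrightarrow> mat_has_deriv F D' t \<Longrightarrow> D = D'"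
  unfolding mat_has_deriv_def
  by (intro eq_matI) (simp_all, metis has_vector_derivative_unique_at)

lemma mat_has_deriv_carrier:
  "mat_has_deriv F D t \<Longrightarrow> F t \<in> carrier_mat a b \<Longrightarrow> D \<in> carrier_mat a b"
  unfolding mat_has_deriv_def carrier_mat_def by simp

lemma mat_has_deriv_mult:
  fixes F G :: "real \<Rightarrow> complex mat"
  assumes F: "\<And>s. F s \<in> carrier_mat n k" and G: "\<And>s. G s \<in> carrier_mat k p"
    and dF: "mat_has_deriv F DF t" and dG: "mat_has_deriv G DG t"
  shows "mat_has_deriv (\<lambda>s. F s * G s) (DF * G t + F t * DG) t"
proof -
  have cF: "DF \<in> carrier_mat n k" and cG: "DG \<in> carrier_mat k p"
    using mat_has_deriv_carrier dF dG F G by blast+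
  show ?thesis
    unfolding mat_has_deriv_def
  proof (intro conjI allI impI)
    fix i j assume "i < dim_row (F t * G t)" "j < dim_col (F t * G t)"
    then have i: "i < n" and j: "j < p"
      using F[of t] G[of t] by auto
    have entry: "(F s * G s) $$ (i, j) = (\<Sum>l<k. F s $$ (i, l) * G s $$ (l, j))" for s
      using F[of s] G[of s] i j by (auto simp: scalar_prod_def atLeast0LessThan intro!: sum.cong)
    have "(DF * G t + F t * DG) $$ (i, j)
        = (\<Sum>l<k. DF $$ (i, l) * G t $$ (l, j)) + (\<Sum>l<k. F t $$ (i, l) * DG $$ (l, j))"
      using F[of t] G[of t] cF cG i j by (auto simp: scalar_prod_def atLeast0LessThan intro!: sum.cong)
    also have "\<dots> = (\<Sum>l<k. F t $$ (i, l) * DG $$ (l, j) + DF $$ (i, l) * G t $$ (l, j))"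
      by (simp add: sum.distrib add.commute)
    finally have entry': "(DF * G t + F t * DG) $$ (i, j)
        = (\<Sum>l<k. F t $$ (i, l) * DG $$ (l, j) + DF $$ (i, l) * G t $$ (l, j))" .
    have "((\<lambda>s. F s $$ (i, l)) has_vector_derivative DF $$ (i, l)) (at t)"
      and "((\<lambda>s. G s $$ (l, j)) has_vector_derivative DG $$ (l, j)) (at t)" if "l < k" for l
      using dF dG F[of t] G[of t] i j that unfolding mat_has_deriv_def by auto
    then show "((\<lambda>s. (F s * G s) $$ (i, j)) has_vector_derivative (DF * G t + F t * DG) $$ (i, j)) (at t)"
      unfolding entry entry' by (intro has_vector_derivative_sum has_vector_derivative_mult) auto
  qed (use F[of t] G[of t] cF cG in auto)
qed

lemma mat_has_deriv_mat_adjoint: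
  fixes F :: "real \<Rightarrow> complex mat"
  assumes dF: "mat_has_deriv F D t" and F: "\<And>s. F s \<in> carrier_mat a b"
  shows "mat_has_deriv (\<lambda>s. mat_adjoint (F s)) (mat_adjoint D) t"
  unfolding mat_has_deriv_def
proof (intro conjI allI impI)
  have D: "D \<in> carrier_mat a b"
    using mat_has_deriv_carrier dF F by blast
  fix i j assume "i < dim_row (mat_adjoint (F t))" "j < dim_col (mat_adjoint (F t))"
  then have ij: "i < b" "j < a"
    using F[of t] by auto
  have entry: "mat_adjoint (F s) $$ (i, j) = cnj (F s $$ (j, i))" for s
    using F[of s] ij by auto
  show "((\<lambda>s. mat_adjoint (F s) $$ (i, j)) has_vector_derivative mat_adjoint D $$ (i, j)) (at t)"
    unfolding entry using D F[of t] ij dF unfolding mat_has_deriv_def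
    by (auto intro!: has_vector_derivative_cnj)
qed (use F[of t] mat_has_deriv_carrier[OF dF F] in auto)

lemma mat_has_deriv_cmat:
  assumes S: "\<And>s. S s \<in> carrier_mat a b" and dS: "mat_has_deriv S D t"
  shows "mat_has_deriv (\<lambda>s. cmat (S s)) (cmat D) t"
  unfolding mat_has_deriv_def
proof (intro conjI allI impI)
  have D: "D \<in> carrier_mat a b"
    using mat_has_deriv_carrier dS S by blast
  fix i j assume "i < dim_row (cmat (S t))" "j < dim_col (cmat (S t))"
  then have ij: "i < a" "j < b"
    using S[of t] by (auto simp: cmat_def)
  have entry: "cmat (S s) $$ (i, j) = of_real (S s $$ (i, j))" for s
    using S[of s] ij by (auto simp: cmat_def)
  show "((\<lambda>s. cmat (S s) $$ (i, j)) has_vector_derivative cmat D $$ (i, j)) (at t)"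
    unfolding entry using D S[of t] ij dS unfolding mat_has_deriv_def
    by (auto simp: cmat_def has_real_derivative_iff_has_vector_derivative
        intro!: has_vector_derivative_of_real)
qed (use S[of t] mat_has_deriv_carrier[OF dS S] in \<open>auto simp: cmat_def\<close>)

lemma mat_has_deriv_product_eq:
  fixes F G H K :: "real \<Rightarrow> complex mat"
  assumes eq: "\<And>s. F s * G s = H s * K s"
    and c: "\<And>s. F s \<in> carrier_mat n k" "\<And>s. G s \<in> carrier_mat k p"
      "\<And>s. H s \<in> carrier_mat n l" "\<And>s. K s \<in> carrier_mat l p"
    and d: "mat_has_deriv F DF t" "mat_has_deriv G DG t" "mat_has_deriv H DH t" "mat_has_deriv K DK t"
  shows "DF * G t + F t * DG = DH * K t + H t * DK"
  using mat_has_deriv_mult[OF c(1,2) d(1,2)] mat_has_deriv_mult[OF c(3,4) d(3,4)]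
  unfolding eq by (rule mat_has_deriv_unique)

theorem mainTheorem7:
  fixes n m r t :: nat
    and A U V Up Vp :: "real \<Rightarrow> complex mat"
    and S Sp :: "real \<Rightarrow> real mat"
    and dA dU dV :: "real \<Rightarrow> complex mat"
    and \<tau> :: real
  assumes "n \<ge> 1" "m \<ge> 1" "r = min n m" "1 \<le> t" "t < r"
    and dims: "\<And>s. A s \<in> carrier_mat n m" "\<And>s. U s \<in> carrier_mat n t"
      "\<And>s. S s \<in> carrier_mat t t" "\<And>s. V s \<in> carrier_mat m t"
      "\<And>s. Up s \<in> carrier_mat n (r - t)" "\<And>s. Sp s \<in> carrier_mat (r - t) (r - t)"
      "\<And>s. Vp s \<in> carrier_mat m (r - t)"
    and svd: "\<And>s. A s = U s * cmat (S s) * mat_adjoint (V s)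
                       + Up s * cmat (Sp s) * mat_adjoint (Vp s)"
      "\<And>s. nonneg_diag (S s)" "\<And>s. nonneg_diag (Sp s)"
      "\<And>s. orthonormal_cols (hcat (U s) (Up s))"
      "\<And>s. orthonormal_cols (hcat (V s) (Vp s))"
    and deriv: "\<And>s. mat_has_deriv A (dA s) s" "\<And>s. mat_has_deriv U (dU s) s"
      "\<And>s. mat_has_deriv V (dV s) s" "\<And>s. mat_differentiable S s"
      "\<And>s. mat_differentiable Up s" "\<And>s. mat_differentiable Sp s"
      "\<And>s. mat_differentiable Vp s"
    and nm: "n \<le> m"
    and pos: "\<And>k. k < t \<Longrightarrow> S \<tau> $$ (k,k) > 0"
  shows "let dU2 = (1\<^sub>m n - U \<tau> * mat_adjoint (U \<tau>)) * dU \<tau>;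
             dV2 = (1\<^sub>m m - V \<tau> * mat_adjoint (V \<tau>)) * dV \<tau>;
             Sc = cmat (S \<tau>);
             Sinv = the (mat_inverse Sc)
         in dU \<tau> = U \<tau> * (mat_adjoint (U \<tau>) * dU \<tau>) + dU2
          \<and> dV \<tau> = V \<tau> * (mat_adjoint (V \<tau>) * dV \<tau>) + dV2
          \<and> dU2 * (Sc * Sc) - A \<tau> * mat_adjoint (A \<tau>) * dU2
              = (1\<^sub>m n - U \<tau> * mat_adjoint (U \<tau>)) * dA \<tau> * V \<tau> * Sc
                + A \<tau> * (1\<^sub>m m - V \<tau> * mat_adjoint (V \<tau>)) * mat_adjoint (dA \<tau>) * U \<tau>
          \<and> dV2 = (1\<^sub>m m - V \<tau> * mat_adjoint (V \<tau>)) * mat_adjoint (dA \<tau>) * U \<tau> * Sinv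
                + mat_adjoint (A \<tau>) * dU2 * Sinv"
proof -
  have Sc: "cmat (S s) \<in> carrier_mat t t" "mat_adjoint (cmat (S s)) = cmat (S s)"
    and Spc: "cmat (Sp s) \<in> carrier_mat (r - t) (r - t)" "mat_adjoint (cmat (Sp s)) = cmat (Sp s)" for s
    using dims(3,6) svd(2,3) mat_adjoint_cmat_diagonal[OF dims(3)] mat_adjoint_cmat_diagonal[OF dims(6)]
    by (auto simp: nonneg_diag_def)
  note rel = svd_singular_vector_relations[OF dims(2) Sc(1) dims(4) dims(5) Spc(1) dims(7)
      svd(1) Sc(2) Spc(2) svd(4,5)]
  obtain DS where DS: "mat_has_deriv S DS \<tau>"
    using deriv(4) unfolding mat_differentiable_def by blast
  note dSc = mat_has_deriv_cmat[OF dims(3) DS]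
  have dAV: "dA \<tau> * V \<tau> + A \<tau> * dV \<tau> = dU \<tau> * cmat (S \<tau>) + U \<tau> * cmat DS"
    by (rule mat_has_deriv_product_eq[OF rel(1) dims(1,4) dims(2) Sc(1) deriv(1,3,2) dSc])
  have dAU: "mat_adjoint (dA \<tau>) * U \<tau> + mat_adjoint (A \<tau>) * dU \<tau>
              = dV \<tau> * cmat (S \<tau>) + V \<tau> * cmat DS"
    by (rule mat_has_deriv_product_eq[OF rel(2) _ dims(2,4) Sc(1)
          mat_has_deriv_mat_adjoint[OF deriv(1) dims(1)] deriv(2,3) dSc])
      (use dims(1) in auto)
  have det: "det (cmat (S \<tau>)) \<noteq> 0"
    using svd(2) by (intro det_cmat_diagonal_nonzero[OF dims(3) _ pos[THEN less_imp_neq, symmetric]])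
      (simp add: nonneg_diag_def)
  note inv = mat_inverse_right_inverse[OF Sc(1) det]
  show ?thesis
    unfolding Let_def
    using svd_derivative_projections[OF
        dims(1) mat_has_deriv_carrier[OF deriv(1) dims(1)]
        dims(2) mat_has_deriv_carrier[OF deriv(2) dims(2)]
        dims(4) mat_has_deriv_carrier[OF deriv(3) dims(4)]
        Sc(1) mat_has_deriv_carrier[OF dSc Sc(1)] inv(2)
        orthonormal_cols_hcatD(1)[OF dims(2,5) svd(4)] orthonormal_cols_hcatD(1)[OF dims(4,7) svd(5)]
        Sc(2) inv(1) rel dAV dAU]
    by blast
qed

end
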